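(* Let $\Psi$ map $\bar t\in S^*$ to $\Psi(\bar t)=\{(\bar t\circ a)\restriction n:\ n\in\omega,\ a \text{ an assignment}\}$. Then for every $\bar t\in S^*$, $\Psi(\bar t)$ is a perfect subtree of $2^{<\omega}$; $\Psi$ is surjective onto Sacks forcing; $\Psi$ preserves $\le$; and $\Psi$ preserves incompatibility. In particular $\Psi$ is a surjective complete embedding of $S^*$ into Sacks forcing.
   Context: Terms. Fix a set $X$ of variable symbols, each taking values in $\{0,1\}$. An $X$-term $t$ is given by a finite sequence of variables $(v_0,\dots,v_{l-1})$ ($l\ge0$) and a function $f:2^l\to2$; a variable $v$ is identified with the term $((v),\mathrm{id})$. An assignment is a function $a:X\to2$; it extends to terms by $t\circ a=f(v_0\circ a,\dots,v_{l-1}\circ a)$. A substitution $\phi$ maps each variable to an $X$-term; $t\circ\phi$ is the term obtained by replacing each variable $v$ in $t$ by $\phi(v)$, and for a family $\bar t=(t_i)$ of terms, $\bar t\circ\phi=(t_i\circ\phi)$; for a family $\bar t=(t_i)$, $\bar t\circ a=(t_i\circ a)$. Terms are identified modulo $t=^*s$ iff $t\circ a=s\circ a$ for all assignments $a$; all equalities of terms are meant modulo $=^*$. A term depends only on variables in $Y\subseteq X$ if it is $=^*$ to a term using only variables from $Y$. A term or variable $s$ is determined by terms $t_0,\dots,t_n$ if for all assignments $a,b$, $(t_i\circ a)_{i\le n}=(t_i\circ b)_{i\le n}$ implies $s\circ a=s\circ b$. Here $X=\{x_j:j\in\omega\}$. $S^*$ is the set of sequences $\bar t=(t_i)_{i\in\omega}$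 of terms such that (1) $t_i$ depends only on the variables $x_j$ with $j\le i$, and (2) each $x_j$ is determined by finitely many $t_i$. An element $\phi\in S^*$ is regarded as the substitution $x_i\mapsto\phi_i$. The order: $\bar t'\le\bar t$ iff there is $\phi\in S^*$ with $\bar t'=\bar t\circ\phi$. Sacks forcing is the set of perfect subtrees of $2^{<\omega}$ ordered by inclusion. *)

theory Defs
  imports Main
begin

text \<open>Terms are identified modulo =*, so a bterm is represented by its semantics, a function
  from assignments to bool that depends on only finitely many variables.\<close>

type_synonym assignment = "nat \<Rightarrow> bool"
type_synonym bterm = "assignment \<Rightarrow> bool"

definition depends_only_on :: "bterm \<Rightarrow> nat set \<Rightarrow> bool" where
  "depends_only_on t Y \<longleftrightarrow> (\<forall>a b. (\<forall>j\<in>Y. a j = b j) \<longrightarrow> t a = t b)"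

definition is_term :: "bterm \<Rightarrow> bool" where
  "is_term t \<longleftrightarrow> (\<exists>Y. finite Y \<and> depends_only_on t Y)"

definition subst :: "bterm \<Rightarrow> (nat \<Rightarrow> bterm) \<Rightarrow> bterm" where
  "subst t \<phi> = (\<lambda>a. t (\<lambda>i. \<phi> i a))"

definition subst_seq :: "(nat \<Rightarrow> bterm) \<Rightarrow> (nat \<Rightarrow> bterm) \<Rightarrow> (nat \<Rightarrow> bterm)" where
  "subst_seq ts \<phi> = (\<lambda>i. subst (ts i) \<phi>)"

definition Sstar :: "(nat \<Rightarrow> bterm) set" where
  "Sstar = {ts. (\<forall>i. is_term (ts i))
      \<and> (\<forall>i. depends_only_on (ts i) {j. j \<le> i})
      \<and> (\<forall>j. \<exists>F. finite F \<and>
            (\<forall>a b. (\<forall>i\<in>F. ts i a = ts i b) \<longrightarrow> a j = b j))}"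

definition Sstar_le :: "(nat \<Rightarrow> bterm) \<Rightarrow> (nat \<Rightarrow> bterm) \<Rightarrow> bool" where
  "Sstar_le ts' ts \<longleftrightarrow> (\<exists>\<phi>\<in>Sstar. ts' = subst_seq ts \<phi>)"

definition Sstar_incompatible :: "(nat \<Rightarrow> bterm) \<Rightarrow> (nat \<Rightarrow> bterm) \<Rightarrow> bool" where
  "Sstar_incompatible s t \<longleftrightarrow> \<not> (\<exists>r\<in>Sstar. Sstar_le r s \<and> Sstar_le r t)"

text \<open>Subtrees of 2^{<omega}: sets of finite bool lists.\<close>
definition perfect_tree :: "bool list set \<Rightarrow> bool" where
  "perfect_tree p \<longleftrightarrow> p \<noteq> {}
     \<and> (\<forall>s\<in>p. \<forall>n. take n s \<in> p)
     \<and> (\<forall>s\<in>p. \<exists>u\<in>p. length s \<le> length u \<and> take (length s) u = s \<and> u @ [False] \<in> p \<and> u @ [True] \<in> p)"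

definition Sacks :: "bool list set set" where
  "Sacks = {p. perfect_tree p}"

definition Sacks_incompatible :: "bool list set \<Rightarrow> bool list set \<Rightarrow> bool" where
  "Sacks_incompatible p q \<longleftrightarrow> \<not> (\<exists>r\<in>Sacks. r \<subseteq> p \<and> r \<subseteq> q)"

definition Psi :: "(nat \<Rightarrow> bterm) \<Rightarrow> bool list set" where
  "Psi ts = {map (\<lambda>i. ts i a) [0..<n] | n a. True}"

end

theory Submission
  imports Defs
begin

text \<open>Since each t_i only reads x_0, ..., x_i while every x_j is recoverable from finitely many
  t_i, flipping one variable produces a splitting node of Psi(ts) above any given node, so Psi(ts)
  is perfect.

  Conversely, a perfect tree p is coded by terms that walk down p and read the next variable at
  each splitting node; they lie in S* and Psi sends them to p. If r is a perfect subtree of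
  Psi(s), the same walk through r, with the reading of x_k delayed until the prefix of s reached
  so far determines x_k, is below s by an explicit substitution. A delay that works for s and t
  at once turns a common extension of Psi(s) and Psi(t) into one of s and t.\<close>

definition seq_prefix :: "(nat \<Rightarrow> bterm) \<Rightarrow> assignment \<Rightarrow> nat \<Rightarrow> bool list" where
  "seq_prefix ts a n = map (\<lambda>i. ts i a) [0..<n]"

lemma length_seq_prefix [simp]: "length (seq_prefix ts a n) = n"
  by (simp add: seq_prefix_def)

lemma nth_seq_prefix [simp]: "i < n \<Longrightarrow> seq_prefix ts a n ! i = ts i a"
  by (simp add: seq_prefix_def)

lemma seq_prefix_0 [simp]: "seq_prefix ts a 0 = []"
  by (simp add: seq_prefix_def)

lemma seq_prefix_Suc: "seq_prefix ts a (Suc n) = seq_prefix ts a n @ [ts n a]"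
  by (simp add: seq_prefix_def)

lemma take_seq_prefix: "take m (seq_prefix ts a n) = seq_prefix ts a (min m n)"
  by (simp add: seq_prefix_def take_map min_def)

lemma seq_prefix_eq_iff: "seq_prefix ts a n = seq_prefix ts' b n \<longleftrightarrow> (\<forall>i<n. ts i a = ts' i b)"
  by (auto simp: seq_prefix_def)

lemma seq_prefix_subst_seq: "seq_prefix (subst_seq ts \<phi>) a n = seq_prefix ts (\<lambda>k. \<phi> k a) n"
  by (simp add: seq_prefix_def subst_seq_def subst_def)

lemma Psi_eq: "Psi ts = {seq_prefix ts a n | n a. True}"
  by (simp add: Psi_def seq_prefix_def)

lemma seq_prefix_in_Psi: "seq_prefix ts a n \<in> Psi ts"
  by (auto simp: Psi_eq)

lemma mem_Psi_iff: "v \<in> Psi ts \<longleftrightarrow> (\<exists>a. v = seq_prefix ts a (length v))"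
  by (auto simp: Psi_eq)

definition determined_by_prefix :: "(nat \<Rightarrow> bterm) \<Rightarrow> nat \<Rightarrow> nat \<Rightarrow> bool" where
  "determined_by_prefix ts n j \<longleftrightarrow> (\<forall>a b. seq_prefix ts a n = seq_prefix ts b n \<longrightarrow> a j = b j)"

lemma determined_by_prefix_mono:
  assumes "determined_by_prefix ts m j" "m \<le> n"
  shows "determined_by_prefix ts n j"
  using assms by (auto simp: determined_by_prefix_def seq_prefix_eq_iff)

lemma Sstar_depends_only_on: "ts \<in> Sstar \<Longrightarrow> depends_only_on (ts i) {j. j \<le> i}"
  by (simp add: Sstar_def)

lemma Sstar_determined_by_prefix:
  assumes "ts \<in> Sstar"
  shows "\<exists>n. determined_by_prefix ts n j"
proof -
  obtain F where F: "finite F" "\<forall>a b. (\<forall>i\<in>F. ts i a = ts i b) \<longrightarrow> a j = b j"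
    using assms unfolding Sstar_def by blast
  then obtain n where "\<forall>i\<in>F. i < n"
    by (auto simp: finite_nat_set_iff_bounded)
  with F(2) have "determined_by_prefix ts n j"
    by (auto simp: determined_by_prefix_def seq_prefix_eq_iff)
  then show ?thesis ..
qed

lemma Sstar_intro:
  assumes "\<And>i. depends_only_on (ts i) {j. j \<le> i}"
    and "\<And>j. \<exists>n. determined_by_prefix ts n j"
  shows "ts \<in> Sstar"
  unfolding Sstar_def
proof (intro CollectI conjI allI)
  fix i
  show "is_term (ts i)"
    using assms(1) by (auto simp: is_term_def)
  show "depends_only_on (ts i) {j. j \<le> i}"
    by (rule assms(1))
next
  fix j
  obtain n where "determined_by_prefix ts n j"
    using assms(2) by blast
  then have "\<forall>a b. (\<forall>i\<in>{..<n}. ts i a = ts i b) \<longrightarrow> a j = b j"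
    by (simp add: determined_by_prefix_def seq_prefix_eq_iff)
  then show "\<exists>F. finite F \<and> (\<forall>a b. (\<forall>i\<in>F. ts i a = ts i b) \<longrightarrow> a j = b j)"
    by blast
qed

lemma seq_prefix_cong:
  assumes "ts \<in> Sstar" "\<And>j. j < n \<Longrightarrow> a j = b j"
  shows "seq_prefix ts a n = seq_prefix ts b n"
  using assms Sstar_depends_only_on[OF assms(1)]
  by (auto simp: seq_prefix_eq_iff depends_only_on_def)

definition splitting :: "bool list set \<Rightarrow> bool list \<Rightarrow> bool" where
  "splitting p v \<longleftrightarrow> v @ [False] \<in> p \<and> v @ [True] \<in> p"

text \<open>Flipping x_n changes some term; the first one to change has index at least n and is
  the splitting point.\<close>
lemma splitting_Psi_above:
  assumes "ts \<in> Sstar"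
  shows "\<exists>m\<ge>n. splitting (Psi ts) (seq_prefix ts a m)"
proof -
  define b where "b = a(n := \<not> a n)"
  obtain L where "determined_by_prefix ts L n"
    using Sstar_determined_by_prefix[OF assms] ..
  moreover have "a n \<noteq> b n"
    by (simp add: b_def)
  ultimately have "\<exists>i. ts i a \<noteq> ts i b"
    unfolding determined_by_prefix_def seq_prefix_eq_iff by blast
  then obtain m where m: "ts m a \<noteq> ts m b" and below: "\<And>i. i < m \<Longrightarrow> ts i a = ts i b"
    using exists_least_iff[of "\<lambda>i. ts i a \<noteq> ts i b"] by blast
  have "n \<le> m"
  proof (rule ccontr)
    assume "\<not> n \<le> m"
    then have "seq_prefix ts a (Suc m) = seq_prefix ts b (Suc m)"
      by (intro seq_prefix_cong[OF assms]) (simp add: b_def)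
    with m show False
      by (simp add: seq_prefix_Suc)
  qed
  moreover have "seq_prefix ts a m = seq_prefix ts b m"
    using below by (simp add: seq_prefix_eq_iff)
  then have "seq_prefix ts a m @ [ts m a] \<in> Psi ts" "seq_prefix ts a m @ [ts m b] \<in> Psi ts"
    using seq_prefix_in_Psi[of ts a "Suc m"] seq_prefix_in_Psi[of ts b "Suc m"]
    by (simp_all only: seq_prefix_Suc)
  with m have "splitting (Psi ts) (seq_prefix ts a m)"
    by (cases "ts m a") (auto simp: splitting_def)
  ultimately show ?thesis
    by blast
qed

lemma perfect_tree_Psi:
  assumes "ts \<in> Sstar"
  shows "perfect_tree (Psi ts)"
  unfolding perfect_tree_def
proof (intro conjI ballI allI)
  show "Psi ts \<noteq> {}"
    using seq_prefix_in_Psi by blast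
next
  fix s n
  assume "s \<in> Psi ts"
  then obtain a k where "s = seq_prefix ts a k"
    by (auto simp: Psi_eq)
  then show "take n s \<in> Psi ts"
    by (simp add: take_seq_prefix seq_prefix_in_Psi)
next
  fix s
  assume "s \<in> Psi ts"
  then obtain a where s: "s = seq_prefix ts a (length s)"
    by (auto simp: mem_Psi_iff)
  obtain m where "length s \<le> m" "splitting (Psi ts) (seq_prefix ts a m)"
    using splitting_Psi_above[OF assms] by blast
  moreover from this have "take (length s) (seq_prefix ts a m) = s"
    by (subst s) (simp add: take_seq_prefix)
  ultimately show "\<exists>u\<in>Psi ts. length s \<le> length u \<and> take (length s) u = s
      \<and> u @ [False] \<in> Psi ts \<and> u @ [True] \<in> Psi ts"
    unfolding splitting_def by (intro bexI[OF _ seq_prefix_in_Psi]) simp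
qed

lemma Psi_mono:
  assumes "Sstar_le s t"
  shows "Psi s \<subseteq> Psi t"
proof
  obtain \<phi> where \<phi>: "s = subst_seq t \<phi>"
    using assms by (auto simp: Sstar_le_def)
  fix v
  assume "v \<in> Psi s"
  then obtain a n where "v = seq_prefix s a n"
    by (auto simp: Psi_eq)
  then show "v \<in> Psi t"
    by (simp add: \<phi> seq_prefix_subst_seq seq_prefix_in_Psi)
qed

lemma perfect_tree_take: "perfect_tree p \<Longrightarrow> v \<in> p \<Longrightarrow> take n v \<in> p"
  by (simp add: perfect_tree_def)

lemma perfect_tree_Nil:
  assumes p: "perfect_tree p"
  shows "[] \<in> p"
proof -
  obtain s where "s \<in> p"
    using p by (auto simp: perfect_tree_def)
  from perfect_tree_take[OF p this, of 0] show ?thesis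
    by simp
qed

lemma perfect_tree_splitting_extension:
  "perfect_tree p \<Longrightarrow> v \<in> p \<Longrightarrow> \<exists>u\<in>p. splitting p u \<and> length v \<le> length u \<and> take (length v) u = v"
  unfolding perfect_tree_def splitting_def by blast

lemma perfect_tree_child:
  assumes p: "perfect_tree p" and v: "v \<in> p"
  shows "v @ [True] \<in> p \<or> v @ [False] \<in> p"
proof -
  obtain u where u: "splitting p u" "length v \<le> length u" "take (length v) u = v"
    using perfect_tree_splitting_extension[OF p v] by blast
  define b where "b = (u @ [False]) ! length v"
  have "take (Suc (length v)) (u @ [False]) = v @ [b]"
    using u(2,3) by (subst take_Suc_conv_app_nth) (simp_all add: b_def)
  moreover have "take (Suc (length v)) (u @ [False]) \<in> p"
    using u(1) unfolding splitting_def by (intro perfect_tree_take[OF p]) simp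
  ultimately show ?thesis
    by (cases b) auto
qed

lemma perfect_tree_splitting_extensions_bounded:
  assumes p: "perfect_tree p"
  shows "\<exists>N. \<forall>v\<in>p. length v = m \<longrightarrow>
           (\<exists>u\<in>p. splitting p u \<and> m \<le> length u \<and> length u \<le> N \<and> take m u = v)"
proof -
  define V where "V = {v\<in>p. length v = m}"
  have "V \<subseteq> {v. set v \<subseteq> UNIV \<and> length v = m}"
    by (auto simp: V_def)
  then have "finite V"
    by (rule finite_subset) (rule finite_lists_length_eq[OF finite_UNIV])
  moreover have "\<forall>v\<in>V. \<exists>u. u \<in> p \<and> splitting p u \<and> m \<le> length u \<and> take m u = v"
    using perfect_tree_splitting_extension[OF p] by (auto simp: V_def)
  ultimately obtain f
    where f: "\<And>v. v \<in> V \<Longrightarrow> f v \<in> p \<and> splitting p (f v) \<and> m \<le> length (f v) \<and> take m (f v) = v"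
    using finite_set_choice[of V] by meson
  from \<open>finite V\<close> obtain N where N: "\<And>v. v \<in> V \<Longrightarrow> length (f v) \<le> N"
    using finite_nat_set_iff_bounded_le[of "length ` f ` V"] by auto
  show ?thesis
  proof (intro exI ballI impI)
    fix v
    assume "v \<in> p" "length v = m"
    then have "v \<in> V"
      by (simp add: V_def)
    with f N show "\<exists>u\<in>p. splitting p u \<and> m \<le> length u \<and> length u \<le> N \<and> take m u = v"
      by (intro bexI[of _ "f v"]) auto
  qed
qed

text \<open>The pair tree_walk p B x n = (v, c) consists of the node v of length n reached by descending
  through p, and the number c of variables consumed so far.\<close>
primrec tree_walk :: "bool list set \<Rightarrow> (nat \<Rightarrow> nat) \<Rightarrow> assignment \<Rightarrow> nat \<Rightarrow> bool list \<times> nat" where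
  "tree_walk p B x 0 = ([], 0)"
| "tree_walk p B x (Suc n) = (case tree_walk p B x n of (v, c) \<Rightarrow>
     if splitting p v \<and> B c \<le> n then (v @ [x c], Suc c) else (v @ [v @ [True] \<in> p], c))"

definition tree_terms :: "bool list set \<Rightarrow> (nat \<Rightarrow> nat) \<Rightarrow> nat \<Rightarrow> bterm" where
  "tree_terms p B i x = fst (tree_walk p B x (Suc i)) ! i"

lemma length_tree_walk [simp]: "length (fst (tree_walk p B x n)) = n"
  by (induction n) (auto split: prod.split)

lemma tree_walk_Suc:
  "tree_walk p B x n = (v, c) \<Longrightarrow> tree_walk p B x (Suc n) =
     (if splitting p v \<and> B c \<le> n then (v @ [x c], Suc c) else (v @ [v @ [True] \<in> p], c))"
  by simp

declare tree_walk.simps(2) [simp del]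

lemma tree_walk_Suc_node:
  "fst (tree_walk p B x (Suc n)) = fst (tree_walk p B x n) @ [tree_terms p B n x]"
proof -
  have "\<exists>b. fst (tree_walk p B x (Suc n)) = fst (tree_walk p B x n) @ [b]"
    by (cases "tree_walk p B x n") (simp add: tree_walk_Suc)
  then show ?thesis
    by (auto simp: tree_terms_def nth_append)
qed

lemma seq_prefix_tree_terms: "seq_prefix (tree_terms p B) x n = fst (tree_walk p B x n)"
  by (induction n) (simp_all add: seq_prefix_Suc tree_walk_Suc_node)

lemma tree_walk_count_le_Suc: "snd (tree_walk p B x n) \<le> snd (tree_walk p B x (Suc n))"
  by (cases "tree_walk p B x n") (simp add: tree_walk_Suc)

lemma tree_walk_count_mono: "m \<le> n \<Longrightarrow> snd (tree_walk p B x m) \<le> snd (tree_walk p B x n)"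
  by (induction n rule: dec_induct) (auto intro: le_trans tree_walk_count_le_Suc)

lemma tree_walk_count_le: "snd (tree_walk p B x n) \<le> n"
proof (induction n)
  case (Suc n)
  then show ?case
    by (cases "tree_walk p B x n") (simp add: tree_walk_Suc)
qed simp

lemma tree_walk_count_delay: "k < snd (tree_walk p B x n) \<Longrightarrow> B k < n"
proof (induction n)
  case (Suc n)
  then show ?case
    by (cases "tree_walk p B x n") (auto simp: tree_walk_Suc less_Suc_eq split: if_splits)
qed simp

lemma tree_walk_cong:
  "(\<And>k. k < snd (tree_walk p B x n) \<Longrightarrow> x k = y k) \<Longrightarrow> tree_walk p B x n = tree_walk p B y n"
proof (induction n)
  case (Suc n)
  obtain v c where e: "tree_walk p B x n = (v, c)"
    by fastforce
  have "tree_walk p B y n = (v, c)"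
    using Suc e tree_walk_count_le_Suc[of p B x n] by fastforce
  with e Suc.prems show ?case
    by (auto simp: tree_walk_Suc)
qed simp

lemma tree_walk_node_inj:
  "fst (tree_walk p B x n) = fst (tree_walk p B y n) \<Longrightarrow>
     snd (tree_walk p B x n) = snd (tree_walk p B y n) \<and> (\<forall>k < snd (tree_walk p B x n). x k = y k)"
proof (induction n)
  case (Suc n)
  obtain v c where e: "tree_walk p B x n = (v, c)"
    by fastforce
  obtain v' c' where e': "tree_walk p B y n = (v', c')"
    by fastforce
  have "fst (tree_walk p B x n) = fst (tree_walk p B y n)"
    using Suc.prems by (simp add: tree_walk_Suc_node)
  with Suc.IH e e' have "v' = v" "c' = c" "\<forall>k<c. x k = y k"
    by auto
  with Suc.prems e e' show ?case
    by (auto simp: tree_walk_Suc less_Suc_eq split: if_splits)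
qed simp

lemma tree_walk_in_tree: "perfect_tree p \<Longrightarrow> fst (tree_walk p B x n) \<in> p"
proof (induction n)
  case 0
  then show ?case
    by (simp add: perfect_tree_Nil)
next
  case (Suc n)
  obtain v c where e: "tree_walk p B x n = (v, c)"
    by fastforce
  with Suc have "v @ [True] \<in> p \<or> v @ [False] \<in> p"
    by (simp add: perfect_tree_child)
  with e show ?case
    by (cases "x c"; cases "v @ [True] \<in> p") (auto simp: tree_walk_Suc splitting_def)
qed

text \<open>As long as the count does not increase, the walk cannot leave the unique path through the
  non-splitting nodes of p; that path leads to u, where the walk must branch.\<close>
lemma tree_walk_count_increases:
  assumes p: "perfect_tree p" and u: "u \<in> p" "splitting p u"
    and m: "m \<le> length u" "fst (tree_walk p B x m) = take m u" "B (snd (tree_walk p B x m)) \<le> m"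
  shows "snd (tree_walk p B x m) < snd (tree_walk p B x (Suc (length u)))"
proof (rule ccontr)
  define c where "c = snd (tree_walk p B x m)"
  assume "\<not> c < snd (tree_walk p B x (Suc (length u)))"
  then have const: "snd (tree_walk p B x k) = c" if "m \<le> k" "k \<le> Suc (length u)" for k
    using tree_walk_count_mono[OF that(1), of p B x] tree_walk_count_mono[OF that(2), of p B x]
    by (simp add: c_def)
  have follow: "k \<le> length u \<longrightarrow> tree_walk p B x k = (take k u, c)" if "m \<le> k" for k
    using that
  proof (induction k rule: dec_induct)
    case base
    with m(2) show ?case
      by (simp add: c_def prod_eq_iff)
  next
    case (step k)
    show ?case
    proof
      assume k: "Suc k \<le> length u"
      with step.IH have e: "tree_walk p B x k = (take k u, c)"
        by simp
      have "B c \<le> k"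
        using m(3) step.hyps by (simp add: c_def)
      moreover have "snd (tree_walk p B x (Suc k)) = c"
        using const step.hyps k by simp
      ultimately have not_splitting: "\<not> splitting p (take k u)"
        using e by (auto simp: tree_walk_Suc split: if_splits)
      have take_Suc: "take (Suc k) u = take k u @ [u ! k]"
        using k by (simp add: take_Suc_conv_app_nth)
      then have "take k u @ [u ! k] \<in> p"
        using perfect_tree_take[OF p u(1)] by metis
      with not_splitting have "(take k u @ [True] \<in> p) = u ! k"
        by (cases "u ! k") (auto simp: splitting_def)
      with e not_splitting take_Suc show "tree_walk p B x (Suc k) = (take (Suc k) u, c)"
        by (simp add: tree_walk_Suc)
    qed
  qed
  have "tree_walk p B x (length u) = (u, c)"
    using follow[of "length u"] m(1) by simp
  moreover have "B c \<le> length u"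
    using m by (simp add: c_def)
  ultimately have "snd (tree_walk p B x (Suc (length u))) = Suc c"
    using u(2) by (simp add: tree_walk_Suc)
  with const[of "Suc (length u)"] m(1) show False
    by simp
qed

text \<open>The bound is uniform in x because only finitely many nodes of a given length need a splitting
  extension.\<close>
lemma tree_walk_count_unbounded:
  assumes p: "perfect_tree p"
  shows "\<exists>n. \<forall>x. j \<le> snd (tree_walk p B x n)"
proof (induction j)
  case (Suc j)
  then obtain n where n: "\<And>x. j \<le> snd (tree_walk p B x n)"
    by blast
  define m where "m = n + B j"
  obtain N where N: "\<And>v. v \<in> p \<Longrightarrow> length v = m \<Longrightarrow>
      \<exists>u\<in>p. splitting p u \<and> m \<le> length u \<and> length u \<le> N \<and> take m u = v"
    using perfect_tree_splitting_extensions_bounded[OF p] by blast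
  have "Suc j \<le> snd (tree_walk p B x (Suc N))" for x
  proof -
    obtain u where u: "u \<in> p" "splitting p u" "m \<le> length u" "length u \<le> N"
        "take m u = fst (tree_walk p B x m)"
      using N[OF tree_walk_in_tree[OF p] length_tree_walk] by blast
    have count_m: "j \<le> snd (tree_walk p B x m)"
      using n[of x] tree_walk_count_mono[of n m p B x] by (simp add: m_def)
    have "Suc j \<le> snd (tree_walk p B x (Suc (length u)))"
    proof (cases "snd (tree_walk p B x m) = j")
      case True
      then have "B (snd (tree_walk p B x m)) \<le> m"
        by (simp add: m_def)
      with True show ?thesis
        using tree_walk_count_increases[OF p u(1,2,3) u(5)[symmetric]] by simp
    next
      case False
      with count_m show ?thesis
        using tree_walk_count_mono[of m "Suc (length u)" p B x] u(3) by simp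
    qed
    with u(4) show ?thesis
      using tree_walk_count_mono[of "Suc (length u)" "Suc N" p B x] by simp
  qed
  then show ?case
    by blast
qed simp

lemma tree_terms_in_Sstar:
  assumes p: "perfect_tree p"
  shows "tree_terms p B \<in> Sstar"
proof (rule Sstar_intro)
  fix i
  show "depends_only_on (tree_terms p B i) {j. j \<le> i}"
    unfolding depends_only_on_def
  proof (intro allI impI)
    fix a b :: assignment
    assume "\<forall>j\<in>{j. j \<le> i}. a j = b j"
    then have "tree_walk p B a (Suc i) = tree_walk p B b (Suc i)"
      using tree_walk_count_le[of p B a "Suc i"] by (intro tree_walk_cong) auto
    then show "tree_terms p B i a = tree_terms p B i b"
      by (simp add: tree_terms_def)
  qed
next
  fix j
  obtain n where n: "\<And>x. Suc j \<le> snd (tree_walk p B x n)"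
    using tree_walk_count_unbounded[OF p] by blast
  have "determined_by_prefix (tree_terms p B) n j"
    unfolding determined_by_prefix_def seq_prefix_tree_terms
    using tree_walk_node_inj n by (metis Suc_le_lessD)
  then show "\<exists>n. determined_by_prefix (tree_terms p B) n j" ..
qed

text \<open>Without delay the walk branches at every splitting node, so it reaches every node of p.\<close>
lemma tree_walk_reaches:
  assumes p: "perfect_tree p"
  shows "v \<in> p \<Longrightarrow> \<exists>x. fst (tree_walk p (\<lambda>_. 0) x (length v)) = v"
proof (induction v rule: rev_induct)
  case (snoc b w)
  then obtain x where x: "fst (tree_walk p (\<lambda>_. 0) x (length w)) = w"
    using perfect_tree_take[OF p snoc.prems, of "length w"] by auto
  define c where "c = snd (tree_walk p (\<lambda>_. 0) x (length w))"
  define y where "y = x(c := b)"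
  have e: "tree_walk p (\<lambda>_. 0) y (length w) = (w, c)"
    using x tree_walk_cong[of p "\<lambda>_. 0" x "length w" y] by (simp add: c_def y_def prod_eq_iff)
  have "y c = b"
    by (simp add: y_def)
  moreover have "splitting p w \<or> (w @ [True] \<in> p) = b"
    using snoc.prems by (cases b) (auto simp: splitting_def)
  ultimately have "fst (tree_walk p (\<lambda>_. 0) y (Suc (length w))) = w @ [b]"
    by (auto simp: tree_walk_Suc[OF e])
  then show ?case
    by auto
qed simp

lemma Psi_tree_terms:
  assumes p: "perfect_tree p"
  shows "Psi (tree_terms p (\<lambda>_. 0)) = p"
proof
  show "Psi (tree_terms p (\<lambda>_. 0)) \<subseteq> p"
    using tree_walk_in_tree[OF p] by (auto simp: Psi_eq seq_prefix_tree_terms)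
  show "p \<subseteq> Psi (tree_terms p (\<lambda>_. 0))"
  proof
    fix v
    assume "v \<in> p"
    then obtain x where "fst (tree_walk p (\<lambda>_. 0) x (length v)) = v"
      using tree_walk_reaches[OF p] by blast
    then show "v \<in> Psi (tree_terms p (\<lambda>_. 0))"
      unfolding mem_Psi_iff seq_prefix_tree_terms by (intro exI[of _ x]) simp
  qed
qed

lemma Psi_image_Sstar: "Psi ` Sstar = Sacks"
proof
  show "Psi ` Sstar \<subseteq> Sacks"
    using perfect_tree_Psi by (auto simp: Sacks_def)
  show "Sacks \<subseteq> Psi ` Sstar"
  proof
    fix p
    assume "p \<in> Sacks"
    then have "p = Psi (tree_terms p (\<lambda>_. 0))" "tree_terms p (\<lambda>_. 0) \<in> Sstar"
      by (simp_all add: Sacks_def Psi_tree_terms tree_terms_in_Sstar)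
    then show "p \<in> Psi ` Sstar"
      by blast
  qed
qed

locale subtree_of_Psi =
  fixes s :: "nat \<Rightarrow> bterm" and r :: "bool list set" and L :: "nat \<Rightarrow> nat"
  assumes s_in_Sstar: "s \<in> Sstar" and perfect: "perfect_tree r" and subtree: "r \<subseteq> Psi s"
    and delay_mono: "mono L" and less_delay: "j < L j"
    and determined: "determined_by_prefix s (L j) j"
begin

text \<open>The substitution witnessing tree_terms r L \<le> s: by the time the walk through r has reached
  length L k, the node it has reached is an s-prefix which already determines x_k.\<close>
definition pullback :: "nat \<Rightarrow> bterm" where
  "pullback k x = (SOME a. seq_prefix s a (L k) = fst (tree_walk r L x (L k))) k"

lemma exists_prefix_witness: "\<exists>a. seq_prefix s a (L k) = fst (tree_walk r L x (L k))"
proof -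
  have "fst (tree_walk r L x (L k)) \<in> Psi s"
    using tree_walk_in_tree[OF perfect] subtree by blast
  then show ?thesis
    by (force simp: mem_Psi_iff)
qed

lemma pullback_eq: "seq_prefix s a (L k) = fst (tree_walk r L x (L k)) \<Longrightarrow> pullback k x = a k"
  using someI_ex[OF exists_prefix_witness] determined
  by (auto simp: pullback_def determined_by_prefix_def)

lemma subst_seq_pullback: "subst_seq s pullback = tree_terms r L"
proof (intro ext)
  fix i x
  obtain a where a: "seq_prefix s a (L i) = fst (tree_walk r L x (L i))"
    using exists_prefix_witness ..
  have "pullback k x = a k" if "k \<le> i" for k
  proof (rule pullback_eq)
    have "L k \<le> L i"
      using delay_mono that by (rule monoD)
    with arg_cong[OF a, of "take (L k)"]
    show "seq_prefix s a (L k) = fst (tree_walk r L x (L k))"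
      by (simp add: seq_prefix_tree_terms[symmetric] take_seq_prefix min_absorb1)
  qed
  then have "s i (\<lambda>k. pullback k x) = s i a"
    using Sstar_depends_only_on[OF s_in_Sstar, of i] by (simp add: depends_only_on_def)
  also have "\<dots> = tree_terms r L i x"
    using arg_cong[OF a, of "\<lambda>v. v ! i"] less_delay[of i]
    by (simp add: seq_prefix_tree_terms[symmetric])
  finally show "subst_seq s pullback i x = tree_terms r L i x"
    by (simp add: subst_seq_def subst_def)
qed

lemma pullback_depends_only_on: "depends_only_on (pullback k) {j. j \<le> k}"
  unfolding depends_only_on_def
proof (intro allI impI)
  fix x y :: assignment
  assume agree: "\<forall>j\<in>{j. j \<le> k}. x j = y j"
  have "x m = y m" if "m < snd (tree_walk r L x (L k))" for m
  proof -
    have "L m < L k"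
      using that by (rule tree_walk_count_delay)
    then have "m \<le> k"
      using monoD[OF delay_mono, of k m] by linarith
    with agree show ?thesis
      by simp
  qed
  then have "tree_walk r L x (L k) = tree_walk r L y (L k)"
    by (rule tree_walk_cong)
  then show "pullback k x = pullback k y"
    by (simp add: pullback_def)
qed

lemma pullback_in_Sstar: "pullback \<in> Sstar"
proof (rule Sstar_intro[OF pullback_depends_only_on])
  fix j
  obtain n where n: "determined_by_prefix (tree_terms r L) n j"
    using Sstar_determined_by_prefix[OF tree_terms_in_Sstar[OF perfect]] ..
  have "determined_by_prefix pullback n j"
    unfolding determined_by_prefix_def
  proof (intro allI impI)
    fix x y :: assignment
    assume "seq_prefix pullback x n = seq_prefix pullback y n"
    then have "seq_prefix s (\<lambda>k. pullback k x) n = seq_prefix s (\<lambda>k. pullback k y) n"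
      by (intro seq_prefix_cong[OF s_in_Sstar]) (simp add: seq_prefix_eq_iff)
    then have "seq_prefix (tree_terms r L) x n = seq_prefix (tree_terms r L) y n"
      by (simp add: subst_seq_pullback[symmetric] seq_prefix_subst_seq)
    with n show "x j = y j"
      by (simp add: determined_by_prefix_def)
  qed
  then show "\<exists>n. determined_by_prefix pullback n j" ..
qed

lemma tree_terms_le: "Sstar_le (tree_terms r L) s"
  unfolding Sstar_le_def by (intro bexI[OF _ pullback_in_Sstar]) (rule subst_seq_pullback[symmetric])

end

lemma exists_mono_delay: "\<exists>L :: nat \<Rightarrow> nat. mono L \<and> (\<forall>j. j < L j \<and> f j \<le> L j)"
proof (intro exI conjI allI)
  show "mono (\<lambda>j. Suc j + (\<Sum>k\<le>j. f k))"
    by (intro monoI add_mono sum_mono2) auto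
  fix j
  show "j < Suc j + (\<Sum>k\<le>j. f k)"
    by simp
  show "f j \<le> Suc j + (\<Sum>k\<le>j. f k)"
    using member_le_sum[of j "{..j}" f] by simp
qed

lemma Sacks_incompatible_Psi:
  assumes s: "s \<in> Sstar" and t: "t \<in> Sstar" and incompatible: "Sstar_incompatible s t"
  shows "Sacks_incompatible (Psi s) (Psi t)"
  unfolding Sacks_incompatible_def
proof
  assume "\<exists>r\<in>Sacks. r \<subseteq> Psi s \<and> r \<subseteq> Psi t"
  then obtain r where r: "perfect_tree r" "r \<subseteq> Psi s" "r \<subseteq> Psi t"
    by (auto simp: Sacks_def)
  obtain ns nt where ns: "\<And>j. determined_by_prefix s (ns j) j"
      and nt: "\<And>j. determined_by_prefix t (nt j) j"
    using Sstar_determined_by_prefix[OF s] Sstar_determined_by_prefix[OF t] by metis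
  obtain L where L: "mono L" "\<And>j. j < L j" "\<And>j. ns j + nt j \<le> L j"
    using exists_mono_delay[of "\<lambda>j. ns j + nt j"] by blast
  have "determined_by_prefix s (L j) j" for j
    by (rule determined_by_prefix_mono[OF ns]) (use L(3)[of j] in simp)
  moreover have "determined_by_prefix t (L j) j" for j
    by (rule determined_by_prefix_mono[OF nt]) (use L(3)[of j] in simp)
  ultimately interpret S: subtree_of_Psi s r L + T: subtree_of_Psi t r L
    using s t r L by unfold_locales auto
  show False
    using incompatible S.tree_terms_le T.tree_terms_le tree_terms_in_Sstar[OF r(1)]
    unfolding Sstar_incompatible_def by blast
qed

theorem mainTheorem2:
  shows "(\<forall>ts\<in>Sstar. perfect_tree (Psi ts))
     \<and> Psi ` Sstar = Sacks
     \<and> (\<forall>s\<in>Sstar. \<forall>t\<in>Sstar. Sstar_le s t \<longrightarrow> Psi s \<subseteq> Psi t)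
     \<and> (\<forall>s\<in>Sstar. \<forall>t\<in>Sstar. Sstar_incompatible s t \<longrightarrow> Sacks_incompatible (Psi s) (Psi t))"
  by (intro conjI ballI impI perfect_tree_Psi Psi_image_Sstar Psi_mono Sacks_incompatible_Psi)

end
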